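(* Assume (A1) and (A2), and let $\alpha>0$ be arbitrary. Along every trajectory of the algorithm described in the context, for all $k\ge0$, $$V_\psi(k+1)-V_\psi(k)\le-\tfrac12\|\bm e_\psi(k)\|^2+\beta_{\psi\xi}\|\bm e_\xi(k)\|^2+\beta_{\psi x}\|\bm e_x(k)\|^2.$$
   Context: Game. $N$ coalitions; coalition $i$ has agents $i1,\dots,in_i$; $\mathcal V_i=\{i1,\dots,in_i\}$, $\mathcal V=\bigcup_i\mathcal V_i$, $n_{\mathrm{sum}}=\sum_in_i$; agents ordered lexicographically. Agent $ij$ has state $x_{ij}\in\mathbb{R}$; $\bm x_i=(x_{i1},\dots,x_{in_i})^T$, $\bm x=(\bm x_1^T,\dots,\bm x_N^T)^T$. Costs $f_{ij}:\mathbb{R}^{n_{\mathrm{sum}}}\to\mathbb{R}$, $f_i=\sum_jf_{ij}$. For $\bm y\in\mathbb{R}^N$, $g_i(\bm y)=f_i((y_1\mathbf 1_{n_1}^T,\dots,y_N\mathbf 1_{n_N}^T)^T)$, $\mathcal Q(\bm y)=(\partial g_i/\partial y_i(\bm y))_{i=1}^N$; $\bm y^*$ denotes the Nash equilibrium of the game $\min_{y_i}g_i(\bm y)$ (i.e. $\mathcal Q(\bm y^* )=0$ under convexity). Graph. Directed graph $\mathcal G=(\mathcal V,\mathcal E)$, $(pq,ij)\in\mathcal E$ meaning $ij$ receives from $pq$. $a_{ij}^{pq}=1$ if $(pq,ij)\in\mathcal E$, $pq\ne ij$, else $0$; $d_{ij}=\sum_{pq}a_{ij}^{pq}$; Laplacian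 $L$ with diagonal $d_{ij}$, off-diagonal $-a_{ij}^{pq}$. $\mathcal G_i$: subgraph induced on $\mathcal V_i$. $\mathcal N_{ij}^{\mathrm{in}}$, $\mathcal N_{ij}^{i\text{-in}}$, $\mathcal N_{ij}^{i\text{-out}}$: in-neighbors in $\mathcal G$, in-neighbors and out-neighbors in $\mathcal G_i$. Assumptions. (A1) $\mathcal G$ and every $\mathcal G_i$ are strongly connected. (A2) each $f_{ij}$ is convex, $C^2$, with $\nabla f_{ij}$ Lipschitz of constant $l_{ij}$. (A3) $\exists l>0$: $(\bm a-\bm b)^T(\mathcal Q(\bm a)-\mathcal Q(\bm b))\ge l\|\bm a-\bm b\|^2$ for all $\bm a,\bm b$. Algorithm. Weights $r_{ij}^{im}>0$ for $im\in\mathcal N_{ij}^{i\text{-in}}\cup\{ij\}$ summing to 1, $c_{im}^{ij}>0$ for $im\in\mathcal N_{ij}^{i\text{-out}}\cup\{ij\}$ summing to 1, other within-coalition weights $0$; $R_i=[r_{ij}^{im}]$, $C_i=[c_{ij}^{im}]$ ($j$ row, $m$ column). Step size $\alpha>0$. Initialization: $x_{ij}(0),\bm\xi_{ij}(0)\in\mathbb{R}^{n_{\mathrm{sum}}}$ arbitrary, $\psi_{ij}^{il}(0)=\frac{\partial f_{ij}}{\partial x_{il}}(\bm\xi_{ij}(0))$. For $k\ge0$: $x_{ij}(k+1)=\sum_mr_{ij}^{im}x_{im}(k)-\frac{\alpha}{n_i}\sum_{m=1}^{n_i}\psi_{ij}^{im}(k)$; $\xi_{ij}^{pq}(k+1)=\xi_{ij}^{pq}(k)-\frac1{d_{ij}+a_{ij}^{pq}}\big(\sum_{lm\in\mathcal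 N_{ij}^{\mathrm{in}}}(\xi_{ij}^{pq}(k)-\xi_{lm}^{pq}(k))+a_{ij}^{pq}(\xi_{ij}^{pq}(k)-x_{pq}(k))\big)$ for all $pq\in\mathcal V$; $\psi_{ij}^{il}(k+1)=\sum_mc_{ij}^{im}\psi_{im}^{il}(k)+\frac{\partial f_{ij}}{\partial x_{il}}(\bm\xi_{ij}(k+1))-\frac{\partial f_{ij}}{\partial x_{il}}(\bm\xi_{ij}(k))$. Auxiliary quantities. $u_i$: $u_i^TR_i=u_i^T$, $u_i^T\mathbf 1=n_i$; $v_i$: $C_iv_i=v_i$, $\mathbf 1^Tv_i=n_i$. $\bar C_i=C_i-\frac{v_i\mathbf 1^T}{n_i}$, $\bar I_{v_i}=I-\frac{v_i\mathbf 1^T}{n_i}$, $\bar R_i=R_i-\frac{\mathbf 1u_i^T}{n_i}$, $\bar I_{u_i}=I-\frac{\mathbf 1u_i^T}{n_i}$. $\Gamma$, $A_d$: diagonal $n_{\mathrm{sum}}^2\times n_{\mathrm{sum}}^2$ matrices with entries $\frac1{d_{ij}+a_{ij}^{pq}}$, $a_{ij}^{pq}$ indexed by $(ij,pq)$, $ij$ outer, $pq$ inner. $H=\Gamma(L\otimes I_{n_{\mathrm{sum}}}+A_d)$, $\mathcal M=I-H$. $W_{c_i},W_{R_i},W_{\mathcal M}$: symmetric positive definite solutions of $\bar C_i^TW\bar C_i-W=-I$, $\bar R_i^TW\bar R_i-W=-I$, $\mathcal M^TW\mathcal M-W=-I$. Spectral matrix norms. $\beta_{\psi\xi}=2\max_{i,j}\{(2\|\bar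 C_i^TW_{c_i}\bar I_{v_i}\|^2+\|\bar I_{v_i}^TW_{c_i}\bar I_{v_i}\|)l_{ij}^2\}\|H\|^2$, $\beta_{\psi x}=n_{\mathrm{sum}}\beta_{\psi\xi}$. Errors and Lyapunov functions. $\bm\psi_i=(\psi_{i1}^{i1},\dots,\psi_{i1}^{in_i},\psi_{i2}^{i1},\dots,\psi_{in_i}^{in_i})^T\in\mathbb{R}^{n_i^2}$, $\bar{\bm\psi}_i=\frac1{n_i}(\mathbf 1_{n_i}^T\otimes I_{n_i})\bm\psi_i$, $\bm e_{\psi_i}=\bm\psi_i-v_i\otimes\bar{\bm\psi}_i$. $\bar x_i=u_i^T\bm x_i/n_i$, $e_{\bar x_i}=\bar x_i-y_i^*$, $\bm e_{x_i}=\bm x_i-\mathbf 1_{n_i}\bar x_i$, $\bar{\bm X}=(\bar x_1\mathbf 1_{n_1}^T,\dots,\bar x_N\mathbf 1_{n_N}^T)^T$. $\bm\xi_i=(\bm\xi_{i1}^T,\dots,\bm\xi_{in_i}^T)^T$, $\bm e_{\xi_i}=\bm\xi_i-\mathbf 1_{n_i}\otimes\bar{\bm X}$. $\bm e_\psi,\bm e_{\bar x},\bm e_x,\bm e_\xi$: stacks over $i=1,\dots,N$. $V_\psi=\sum_i\bm e_{\psi_i}^T(W_{c_i}\otimes I_{n_i})\bm e_{\psi_i}$, $V_{\bar x}=\sum_i\frac{n_i^3}{\alpha u_i^Tv_i}e_{\bar x_i}^2$, $V_\xi=\bm e_\xi^TW_{\mathcal M}\bm e_\xi$, $V_x=\sum_i\bm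 e_{x_i}^TW_{R_i}\bm e_{x_i}$, each evaluated at time $k$. *)

theory Defs
  imports "HOL-Analysis.Analysis"
begin

(* Coalitions are the elements of a finite type 'c, agents the elements of a finite type 'a;
   coal :: 'a => 'c assigns every agent to its coalition (surjective: every coalition is nonempty).
   R^{n_sum} is real^'a.  R^{n_sum^2} is indexed by 'a \<times> 'a  (pair (ij,pq), ij outer).
   The edge set E :: ('a \<times> 'a) set; (pq, ij) \<in> E means ij receives from pq. *)

definition Vc :: "('a \<Rightarrow> 'c) \<Rightarrow> 'c \<Rightarrow> 'a set" where
  "Vc coal i = {a. coal a = i}"

definition ncoal :: "('a \<Rightarrow> 'c) \<Rightarrow> 'c \<Rightarrow> nat" where
  "ncoal coal i = card (Vc coal i)"

definition strongly_connected :: "'v set \<Rightarrow> ('v \<times> 'v) set \<Rightarrow> bool" where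
  "strongly_connected S E \<longleftrightarrow> (\<forall>u\<in>S. \<forall>w\<in>S. (u, w) \<in> (E \<inter> (S \<times> S))\<^sup>*)"

(* a_{ij}^{pq} with a = ij, b = pq *)
definition adj :: "('a \<times> 'a) set \<Rightarrow> 'a \<Rightarrow> 'a \<Rightarrow> real" where
  "adj E a b = (if (b, a) \<in> E \<and> b \<noteq> a then 1 else 0)"

definition deg :: "('a::finite \<times> 'a) set \<Rightarrow> 'a \<Rightarrow> real" where
  "deg E a = (\<Sum>b\<in>UNIV. adj E a b)"

definition lap :: "('a::finite \<times> 'a) set \<Rightarrow> 'a \<Rightarrow> 'a \<Rightarrow> real" where
  "lap E a b = (if a = b then deg E a else - adj E a b)"

definition Nin :: "('a \<times> 'a) set \<Rightarrow> 'a \<Rightarrow> 'a set" where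
  "Nin E a = {b. (b, a) \<in> E \<and> b \<noteq> a}"

definition Nin_i :: "('a \<Rightarrow> 'c) \<Rightarrow> ('a \<times> 'a) set \<Rightarrow> 'a \<Rightarrow> 'a set" where
  "Nin_i coal E a = {b. (b, a) \<in> E \<and> b \<noteq> a \<and> coal b = coal a}"

definition Nout_i :: "('a \<Rightarrow> 'c) \<Rightarrow> ('a \<times> 'a) set \<Rightarrow> 'a \<Rightarrow> 'a set" where
  "Nout_i coal E a = {b. (a, b) \<in> E \<and> b \<noteq> a \<and> coal b = coal a}"

(* H = Gamma (L \<otimes> I + A_d), indexed by pairs (ij,pq) *)
definition Hmat :: "('a::finite \<times> 'a) set \<Rightarrow> ('a \<times> 'a) \<Rightarrow> ('a \<times> 'a) \<Rightarrow> real" where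
  "Hmat E = (\<lambda>(a, b) (a', b').
      (if b = b' then (lap E a a' + (if a' = a then adj E a b else 0)) / (deg E a + adj E a b)
       else 0))"

definition mmul :: "'i set \<Rightarrow> ('i \<Rightarrow> 'i \<Rightarrow> real) \<Rightarrow> ('i \<Rightarrow> 'i \<Rightarrow> real) \<Rightarrow> 'i \<Rightarrow> 'i \<Rightarrow> real" where
  "mmul S A B = (\<lambda>j m. \<Sum>l\<in>S. A j l * B l m)"

definition mtr :: "('i \<Rightarrow> 'i \<Rightarrow> real) \<Rightarrow> 'i \<Rightarrow> 'i \<Rightarrow> real" where
  "mtr A = (\<lambda>j m. A m j)"

definition spec_norm :: "'i set \<Rightarrow> ('i \<Rightarrow> 'i \<Rightarrow> real) \<Rightarrow> real" where
  "spec_norm S M = (SUP x\<in>{x. (\<Sum>b\<in>S. (x b)\<^sup>2) \<le> 1}. sqrt (\<Sum>a\<in>S. (\<Sum>b\<in>S. M a b * x b)\<^sup>2))"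

definition Cbar :: "('a \<Rightarrow> 'c) \<Rightarrow> ('a \<Rightarrow> 'a \<Rightarrow> real) \<Rightarrow> ('a \<Rightarrow> real) \<Rightarrow> 'c \<Rightarrow> 'a \<Rightarrow> 'a \<Rightarrow> real" where
  "Cbar coal C v i = (\<lambda>j m. C j m - v j / real (ncoal coal i))"

definition Ibar :: "('a \<Rightarrow> 'c) \<Rightarrow> ('a \<Rightarrow> real) \<Rightarrow> 'c \<Rightarrow> 'a \<Rightarrow> 'a \<Rightarrow> real" where
  "Ibar coal v i = (\<lambda>j m. (if j = m then 1 else 0) - v j / real (ncoal coal i))"

definition pd :: "(real^'a \<Rightarrow> real) \<Rightarrow> 'a \<Rightarrow> real^'a \<Rightarrow> real" where
  "pd f l x = frechet_derivative f (at x) (axis l 1)"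

definition grad :: "(real^'a \<Rightarrow> real) \<Rightarrow> real^'a \<Rightarrow> real^'a" where
  "grad f x = (\<chi> l. pd f l x)"

definition C2 :: "(real^'a \<Rightarrow> real) \<Rightarrow> bool" where
  "C2 f \<longleftrightarrow> (\<forall>x. f differentiable (at x)) \<and>
            (\<forall>l x. (\<lambda>y. pd f l y) differentiable (at x)) \<and>
            (\<forall>l m. continuous_on UNIV (\<lambda>x. pd (\<lambda>y. pd f l y) m x))"

definition beta_psi_xi ::
  "('a::finite \<Rightarrow> 'c) \<Rightarrow> ('a \<times> 'a) set \<Rightarrow> ('a \<Rightarrow> 'a \<Rightarrow> real) \<Rightarrow> ('a \<Rightarrow> real)
    \<Rightarrow> ('c \<Rightarrow> 'a \<Rightarrow> 'a \<Rightarrow> real) \<Rightarrow> ('a \<Rightarrow> real) \<Rightarrow> real" where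
  "beta_psi_xi coal E C v Wc lip =
     2 * (MAX a\<in>UNIV.
            (2 * (spec_norm (Vc coal (coal a))
                    (mmul (Vc coal (coal a)) (mtr (Cbar coal C v (coal a)))
                       (mmul (Vc coal (coal a)) (Wc (coal a)) (Ibar coal v (coal a)))))\<^sup>2
             + spec_norm (Vc coal (coal a))
                    (mmul (Vc coal (coal a)) (mtr (Ibar coal v (coal a)))
                       (mmul (Vc coal (coal a)) (Wc (coal a)) (Ibar coal v (coal a)))))
            * (lip a)\<^sup>2)
       * (spec_norm UNIV (Hmat E))\<^sup>2"

definition beta_psi_x ::
  "('a::finite \<Rightarrow> 'c) \<Rightarrow> ('a \<times> 'a) set \<Rightarrow> ('a \<Rightarrow> 'a \<Rightarrow> real) \<Rightarrow> ('a \<Rightarrow> real)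
    \<Rightarrow> ('c \<Rightarrow> 'a \<Rightarrow> 'a \<Rightarrow> real) \<Rightarrow> ('a \<Rightarrow> real) \<Rightarrow> real" where
  "beta_psi_x coal E C v Wc lip = real CARD('a) * beta_psi_xi coal E C v Wc lip"

(* errors; psi k is the array psi_{ij}^{il}(k) given as  ps a b  (a = ij, b = il) *)
definition psibar :: "('a \<Rightarrow> 'c) \<Rightarrow> ('a \<Rightarrow> 'a \<Rightarrow> real) \<Rightarrow> 'c \<Rightarrow> 'a \<Rightarrow> real" where
  "psibar coal ps i l = (\<Sum>j\<in>Vc coal i. ps j l) / real (ncoal coal i)"

definition e_psi :: "('a \<Rightarrow> 'c) \<Rightarrow> ('a \<Rightarrow> real) \<Rightarrow> ('a \<Rightarrow> 'a \<Rightarrow> real) \<Rightarrow> 'a \<Rightarrow> 'a \<Rightarrow> real" where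
  "e_psi coal v ps a b = ps a b - v a * psibar coal ps (coal a) b"

definition sqnorm_e_psi :: "('a::finite \<Rightarrow> 'c) \<Rightarrow> ('a \<Rightarrow> real) \<Rightarrow> ('a \<Rightarrow> 'a \<Rightarrow> real) \<Rightarrow> real" where
  "sqnorm_e_psi coal v ps = (\<Sum>a\<in>UNIV. \<Sum>b\<in>Vc coal (coal a). (e_psi coal v ps a b)\<^sup>2)"

(* V_psi = sum_i e_psi_i^T (W_{c_i} \<otimes> I) e_psi_i *)
definition V_psi :: "('a \<Rightarrow> 'c::finite) \<Rightarrow> ('a \<Rightarrow> real) \<Rightarrow> ('c \<Rightarrow> 'a \<Rightarrow> 'a \<Rightarrow> real)
    \<Rightarrow> ('a \<Rightarrow> 'a \<Rightarrow> real) \<Rightarrow> real" where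
  "V_psi coal v Wc ps = (\<Sum>i\<in>UNIV. \<Sum>l\<in>Vc coal i. \<Sum>j\<in>Vc coal i. \<Sum>m\<in>Vc coal i.
        e_psi coal v ps j l * Wc i j m * e_psi coal v ps m l)"

definition xbar :: "('a \<Rightarrow> 'c) \<Rightarrow> ('a \<Rightarrow> real) \<Rightarrow> ('a \<Rightarrow> real) \<Rightarrow> 'c \<Rightarrow> real" where
  "xbar coal u xs i = (\<Sum>j\<in>Vc coal i. u j * xs j) / real (ncoal coal i)"

definition sqnorm_e_x :: "('a::finite \<Rightarrow> 'c) \<Rightarrow> ('a \<Rightarrow> real) \<Rightarrow> ('a \<Rightarrow> real) \<Rightarrow> real" where
  "sqnorm_e_x coal u xs = (\<Sum>a\<in>UNIV. (xs a - xbar coal u xs (coal a))\<^sup>2)"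

definition sqnorm_e_xi :: "('a::finite \<Rightarrow> 'c) \<Rightarrow> ('a \<Rightarrow> real) \<Rightarrow> ('a \<Rightarrow> real) \<Rightarrow> ('a \<Rightarrow> real^'a) \<Rightarrow> real" where
  "sqnorm_e_xi coal u xs xis = (\<Sum>a\<in>UNIV. \<Sum>b\<in>UNIV. (xis a $ b - xbar coal u xs (coal b))\<^sup>2)"

end

(* Fix a coalition i and a column l. Because C_i is column stochastic with C_i v_i = v_i, the tracking
   error obeys e_psi(k+1) = Cbar_i e_psi(k) + Ibar_{v_i} d(k), where d(k) collects the increments of the
   local partial derivatives. The Lyapunov equation for W_{c_i} makes the quadratic form drop by
   |e_psi|^2 along Cbar_i; the cross and perturbation terms are bounded by spectral norms, and AM-GM on
   the cross term leaves -1/2 |e_psi|^2 plus a multiple of |d|^2. Lipschitz gradients bound |d| by the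
   increment of xi, and xi(k+1) - xi(k) = -H e_xi + Gamma A_d e_x since the Laplacian annihilates the
   consensus part; a nonzero weight of Gamma A_d is 1/(d_ij + 1) <= 1 = H_{(ij,pq),(ij,pq)} <= ||H||. *)

theory Submission
  imports Defs
begin

section \<open>Matrices and bilinear forms on a finite index set\<close>

definition mat_vec :: "'i set \<Rightarrow> ('i \<Rightarrow> 'i \<Rightarrow> real) \<Rightarrow> ('i \<Rightarrow> real) \<Rightarrow> 'i \<Rightarrow> real" where
  "mat_vec S M z = (\<lambda>a. \<Sum>b\<in>S. M a b * z b)"

definition bform :: "'i set \<Rightarrow> ('i \<Rightarrow> 'i \<Rightarrow> real) \<Rightarrow> ('i \<Rightarrow> real) \<Rightarrow> ('i \<Rightarrow> real) \<Rightarrow> real" where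
  "bform S W z w = (\<Sum>a\<in>S. \<Sum>b\<in>S. z a * W a b * w b)"

lemma bform_eq_sum_mat_vec: "bform S W z w = (\<Sum>a\<in>S. z a * mat_vec S W w a)"
  by (simp add: bform_def mat_vec_def sum_distrib_left mult.assoc)

lemma L2_set_pow2: "(L2_set f A)\<^sup>2 = (\<Sum>i\<in>A. (f i)\<^sup>2)"
  by (simp add: L2_set_def sum_nonneg)

lemma spec_norm_eq_SUP_L2_set:
  "spec_norm S M = (SUP x\<in>{x. L2_set x S \<le> 1}. L2_set (mat_vec S M x) S)"
  unfolding spec_norm_def L2_set_def mat_vec_def by simp

lemma spec_norm_bdd_above:
  assumes "finite S"
  shows "bdd_above ((\<lambda>x. L2_set (mat_vec S M x) S) ` {x. L2_set x S \<le> 1})"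
proof (rule bdd_aboveI2)
  fix x assume "x \<in> {x. L2_set x S \<le> 1}"
  then have x_le_1: "\<bar>x b\<bar> \<le> 1" if "b \<in> S" for b
  proof -
    have "\<bar>x b\<bar> \<le> L2_set (\<lambda>b. \<bar>x b\<bar>) S" by (rule member_le_L2_set[OF assms that])
    also have "\<dots> = L2_set x S" by (simp add: L2_set_def)
    finally show ?thesis using \<open>x \<in> _\<close> by simp
  qed
  have "L2_set (mat_vec S M x) S \<le> (\<Sum>a\<in>S. \<bar>mat_vec S M x a\<bar>)"
    by (rule L2_set_le_sum_abs)
  also have "\<dots> \<le> (\<Sum>a\<in>S. \<Sum>b\<in>S. \<bar>M a b\<bar>)"
    unfolding mat_vec_def
    by (intro sum_mono order.trans[OF sum_abs]) (auto simp: abs_mult intro: mult_left_le x_le_1)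
  finally show "L2_set (mat_vec S M x) S \<le> (\<Sum>a\<in>S. \<Sum>b\<in>S. \<bar>M a b\<bar>)" .
qed

lemma L2_set_mat_vec_le_spec_norm:
  assumes "finite S" "L2_set x S \<le> 1"
  shows "L2_set (mat_vec S M x) S \<le> spec_norm S M"
  unfolding spec_norm_eq_SUP_L2_set
  by (rule cSUP_upper[OF _ spec_norm_bdd_above[OF assms(1)]]) (use assms(2) in simp)

lemma spec_norm_nonneg: "finite S \<Longrightarrow> 0 \<le> spec_norm S M"
  by (rule order.trans[OF L2_set_nonneg L2_set_mat_vec_le_spec_norm[of S "\<lambda>_. 0"]])
    (simp_all add: L2_set_def)

lemma L2_set_mat_vec_le:
  assumes "finite S"
  shows "L2_set (mat_vec S M x) S \<le> spec_norm S M * L2_set x S"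
proof (cases "L2_set x S = 0")
  case True
  then have "mat_vec S M x a = 0" for a
    using assms by (simp add: L2_set_eq_0_iff mat_vec_def)
  then have "L2_set (mat_vec S M x) S = 0" by (simp add: L2_set_def)
  with spec_norm_nonneg[OF assms, of M] show ?thesis by simp
next
  case False
  define t where "t = L2_set x S"
  have "t > 0" using False by (simp add: t_def order_less_le)
  have scale: "L2_set (\<lambda>b. y b / t) S = L2_set y S / t" for y
    using L2_set_left_distrib[of "1 / t" y S] \<open>t > 0\<close> by simp
  have "L2_set (mat_vec S M (\<lambda>b. x b / t)) S \<le> spec_norm S M"
    using \<open>t > 0\<close> by (intro L2_set_mat_vec_le_spec_norm assms) (simp only: scale, simp add: t_def)
  moreover have "mat_vec S M (\<lambda>b. x b / t) = (\<lambda>a. mat_vec S M x a / t)"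
    by (simp add: mat_vec_def sum_divide_distrib)
  ultimately have "L2_set (mat_vec S M x) S / t \<le> spec_norm S M"
    by (simp add: scale)
  then show ?thesis using \<open>t > 0\<close> by (simp add: t_def field_simps)
qed

lemma sum_sq_mat_vec_le:
  assumes "finite S"
  shows "(\<Sum>a\<in>S. (mat_vec S M x a)\<^sup>2) \<le> (spec_norm S M)\<^sup>2 * (\<Sum>b\<in>S. (x b)\<^sup>2)"
  using power_mono[OF L2_set_mat_vec_le[OF assms, of M x] L2_set_nonneg, of 2]
  by (simp add: L2_set_pow2 power_mult_distrib)

lemma abs_diag_le_spec_norm:
  assumes "finite S" "p \<in> S"
  shows "\<bar>M p p\<bar> \<le> spec_norm S M"
proof -
  define x where "x = (\<lambda>b. if b = p then 1 else 0 :: real)"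
  have "(x b)\<^sup>2 = x b" for b by (simp add: x_def)
  then have "L2_set x S = 1"
    using assms by (simp add: L2_set_def x_def)
  then have "L2_set (mat_vec S M x) S \<le> spec_norm S M"
    using L2_set_mat_vec_le_spec_norm[OF assms(1)] by simp
  moreover have "mat_vec S M x = (\<lambda>a. M a p)"
    using assms by (simp add: mat_vec_def x_def if_distrib cong: if_cong)
  moreover have "\<bar>M p p\<bar> \<le> L2_set (\<lambda>a. M a p) S"
    using member_le_L2_set[OF assms, of "\<lambda>a. \<bar>M a p\<bar>"] by (simp add: L2_set_def)
  ultimately show ?thesis by simp
qed

lemma bform_le_spec_norm:
  assumes "finite S"
  shows "bform S M z w \<le> L2_set z S * spec_norm S M * L2_set w S"
proof -
  have "bform S M z w = (\<Sum>a\<in>S. z a * mat_vec S M w a)"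
    by (rule bform_eq_sum_mat_vec)
  also have "\<dots> \<le> (\<Sum>a\<in>S. \<bar>z a\<bar> * \<bar>mat_vec S M w a\<bar>)"
    by (intro sum_mono) (simp flip: abs_mult)
  also have "\<dots> \<le> L2_set z S * L2_set (mat_vec S M w) S"
    by (rule L2_set_mult_ineq)
  also have "\<dots> \<le> L2_set z S * (spec_norm S M * L2_set w S)"
    by (intro mult_left_mono L2_set_mat_vec_le assms L2_set_nonneg)
  finally show ?thesis by (simp add: mult.assoc)
qed

lemma mat_vec_mmul: "mat_vec S (mmul S W B) w a = mat_vec S W (mat_vec S B w) a"
  unfolding mat_vec_def mmul_def
  by (simp add: sum_distrib_left sum_distrib_right mult_ac) (rule sum.swap)

lemma mat_vec_mtr: "mat_vec S (mtr A) y b = (\<Sum>a\<in>S. A a b * y a)"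
  by (simp add: mat_vec_def mtr_def)

lemma bform_mat_vec:
  "bform S W (mat_vec S A z) (mat_vec S B w) = bform S (mmul S (mtr A) (mmul S W B)) z w"
proof -
  have "bform S W (mat_vec S A z) (mat_vec S B w)
      = (\<Sum>a\<in>S. \<Sum>b\<in>S. A a b * z b * mat_vec S (mmul S W B) w a)"
    by (simp add: bform_eq_sum_mat_vec mat_vec_mmul mat_vec_def[of S A] sum_distrib_right)
  also have "\<dots> = (\<Sum>b\<in>S. z b * mat_vec S (mtr A) (mat_vec S (mmul S W B) w) b)"
    by (subst sum.swap) (simp add: mat_vec_mtr sum_distrib_left mult_ac)
  also have "\<dots> = bform S (mmul S (mtr A) (mmul S W B)) z w"
    by (simp add: bform_eq_sum_mat_vec mat_vec_mmul)
  finally show ?thesis .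
qed

lemma bform_add:
  "bform S W (\<lambda>a. z1 a + z2 a) (\<lambda>a. w1 a + w2 a)
     = bform S W z1 w1 + bform S W z1 w2 + bform S W z2 w1 + bform S W z2 w2"
  by (simp add: bform_def distrib_left distrib_right sum.distrib)

lemma bform_sym:
  assumes "\<And>a b. a \<in> S \<Longrightarrow> b \<in> S \<Longrightarrow> W a b = W b a"
  shows "bform S W z w = bform S W w z"
  unfolding bform_def by (subst sum.swap) (intro sum.cong refl, simp add: assms mult_ac)

lemma bform_lyapunov:
  assumes "finite S"
    and "\<And>a b. a \<in> S \<Longrightarrow> b \<in> S \<Longrightarrow> X a b - W a b = - (if a = b then 1 else 0)"
  shows "bform S X e e = bform S W e e - (\<Sum>a\<in>S. (e a)\<^sup>2)"
proof -
  have "bform S X e e = (\<Sum>a\<in>S. \<Sum>b\<in>S. e a * W a b * e b - (if a = b then e a * e b else 0))"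
    unfolding bform_def
  proof (intro sum.cong refl)
    fix a b assume "a \<in> S" "b \<in> S"
    then have X_eq: "X a b = W a b - (if a = b then 1 else 0)"
      using assms(2)[of a b] by (cases "a = b") (simp_all add: algebra_simps)
    show "e a * X a b * e b = e a * W a b * e b - (if a = b then e a * e b else 0)"
      unfolding X_eq by (simp add: algebra_simps)
  qed
  then show ?thesis using assms(1) by (simp add: bform_def sum_subtractf power2_eq_square)
qed

definition perturbation_gain ::
  "'i set \<Rightarrow> ('i \<Rightarrow> 'i \<Rightarrow> real) \<Rightarrow> ('i \<Rightarrow> 'i \<Rightarrow> real) \<Rightarrow> ('i \<Rightarrow> 'i \<Rightarrow> real) \<Rightarrow> real" where
  "perturbation_gain S A W B =
     2 * (spec_norm S (mmul S (mtr A) (mmul S W B)))\<^sup>2 + spec_norm S (mmul S (mtr B) (mmul S W B))"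

lemma perturbation_gain_nonneg: "finite S \<Longrightarrow> 0 \<le> perturbation_gain S A W B"
  by (simp add: perturbation_gain_def spec_norm_nonneg)

lemma bform_lyapunov_step:
  assumes fin: "finite S"
    and W_sym: "\<And>a b. a \<in> S \<Longrightarrow> b \<in> S \<Longrightarrow> W a b = W b a"
    and lyap: "\<And>a b. a \<in> S \<Longrightarrow> b \<in> S \<Longrightarrow>
                 mmul S (mtr A) (mmul S W A) a b - W a b = - (if a = b then 1 else 0)"
    and step: "\<And>a. a \<in> S \<Longrightarrow> e' a = mat_vec S A e a + mat_vec S B d a"
  shows "bform S W e' e' - bform S W e e
           \<le> - (1/2) * (\<Sum>a\<in>S. (e a)\<^sup>2) + perturbation_gain S A W B * (\<Sum>a\<in>S. (d a)\<^sup>2)"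
proof -
  define sM where "sM = spec_norm S (mmul S (mtr A) (mmul S W B))"
  define sK where "sK = spec_norm S (mmul S (mtr B) (mmul S W B))"
  define ne where "ne = L2_set e S"
  define nd where "nd = L2_set d S"
  have "bform S W e' e'
      = bform S W (\<lambda>a. mat_vec S A e a + mat_vec S B d a) (\<lambda>a. mat_vec S A e a + mat_vec S B d a)"
    unfolding bform_def using step by (intro sum.cong) simp_all
  also have "\<dots> = bform S W (mat_vec S A e) (mat_vec S A e) + 2 * bform S W (mat_vec S A e) (mat_vec S B d)
       + bform S W (mat_vec S B d) (mat_vec S B d)"
    unfolding bform_add using bform_sym[OF W_sym, where z = "mat_vec S B d" and w = "mat_vec S A e"] by simp
  also have "\<dots> = bform S W e e - ne\<^sup>2 + 2 * bform S (mmul S (mtr A) (mmul S W B)) e d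
       + bform S (mmul S (mtr B) (mmul S W B)) d d"
    using bform_lyapunov[of S "mmul S (mtr A) (mmul S W A)" W, OF fin lyap]
    by (simp add: bform_mat_vec ne_def L2_set_pow2)
  finally have "bform S W e' e' - bform S W e e
      = - ne\<^sup>2 + 2 * bform S (mmul S (mtr A) (mmul S W B)) e d + bform S (mmul S (mtr B) (mmul S W B)) d d"
    by simp
  moreover have "bform S (mmul S (mtr A) (mmul S W B)) e d \<le> ne * sM * nd"
    unfolding ne_def sM_def nd_def by (rule bform_le_spec_norm[OF fin])
  moreover have "bform S (mmul S (mtr B) (mmul S W B)) d d \<le> nd * sK * nd"
    unfolding sK_def nd_def by (rule bform_le_spec_norm[OF fin])
  \<comment> \<open>AM-GM on the cross term\<close>
  moreover have "2 * (ne * sM * nd) \<le> (1/2) * ne\<^sup>2 + 2 * sM\<^sup>2 * nd\<^sup>2"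
    using zero_le_power2[of "ne - 2 * sM * nd"] by (simp add: power2_eq_square algebra_simps)
  ultimately have "bform S W e' e' - bform S W e e \<le> - (1/2) * ne\<^sup>2 + (2 * sM\<^sup>2 + sK) * nd\<^sup>2"
    by (simp add: power2_eq_square algebra_simps)
  then show ?thesis
    by (simp add: ne_def nd_def sM_def sK_def perturbation_gain_def L2_set_pow2)
qed

section \<open>The tracking error of \<psi>\<close>

lemma sum_Vc_partition:
  fixes coal :: "'a::finite \<Rightarrow> 'c::finite"
  shows "(\<Sum>i\<in>UNIV. \<Sum>j\<in>Vc coal i. g i j) = (\<Sum>j\<in>UNIV. g (coal j) j)"
proof -
  have "(\<Sum>i\<in>UNIV. \<Sum>j\<in>Vc coal i. g i j) = (\<Sum>i\<in>UNIV. \<Sum>j\<in>{j \<in> UNIV. coal j = i}. g (coal j) j)"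
    by (intro sum.cong) (simp_all add: Vc_def)
  also have "\<dots> = (\<Sum>j\<in>UNIV. g (coal j) j)"
    by (rule sum.group) simp_all
  finally show ?thesis .
qed

lemma psibar_step:
  assumes "finite (Vc coal i)"
    and C_sum: "\<And>m. m \<in> Vc coal i \<Longrightarrow> (\<Sum>j\<in>Vc coal i. C j m) = 1"
    and step: "\<And>j. j \<in> Vc coal i \<Longrightarrow> \<psi>1 j l = (\<Sum>m\<in>Vc coal i. C j m * \<psi>0 m l) + d j"
  shows "psibar coal \<psi>1 i l = psibar coal \<psi>0 i l + (\<Sum>j\<in>Vc coal i. d j) / real (ncoal coal i)"
proof -
  have "(\<Sum>j\<in>Vc coal i. \<Sum>m\<in>Vc coal i. C j m * \<psi>0 m l) = (\<Sum>m\<in>Vc coal i. (\<Sum>j\<in>Vc coal i. C j m) * \<psi>0 m l)"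
    by (subst sum.swap) (simp add: sum_distrib_right)
  then have "(\<Sum>j\<in>Vc coal i. \<psi>1 j l) = (\<Sum>m\<in>Vc coal i. \<psi>0 m l) + (\<Sum>j\<in>Vc coal i. d j)"
    by (simp add: step sum.distrib C_sum)
  then show ?thesis by (simp add: psibar_def add_divide_distrib)
qed

lemma e_psi_step:
  assumes fin: "finite (Vc coal i)" and j: "j \<in> Vc coal i"
    and C_sum: "\<And>m. m \<in> Vc coal i \<Longrightarrow> (\<Sum>j\<in>Vc coal i. C j m) = 1"
    and v_right: "\<And>j. j \<in> Vc coal i \<Longrightarrow> (\<Sum>m\<in>Vc coal i. C j m * v m) = v j"
    and v_sum: "(\<Sum>j\<in>Vc coal i. v j) = real (ncoal coal i)"
    and step: "\<And>j. j \<in> Vc coal i \<Longrightarrow> \<psi>1 j l = (\<Sum>m\<in>Vc coal i. C j m * \<psi>0 m l) + d j"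
  shows "e_psi coal v \<psi>1 j l
           = mat_vec (Vc coal i) (Cbar coal C v i) (\<lambda>m. e_psi coal v \<psi>0 m l) j
             + mat_vec (Vc coal i) (Ibar coal v i) d j"
proof -
  define n where "n = real (ncoal coal i)"
  define p where "p = psibar coal \<psi>0 i l"
  have "n > 0" using fin j by (auto simp: n_def ncoal_def card_gt_0_iff)
  have coal_eq: "coal m = i" if "m \<in> Vc coal i" for m using that by (simp add: Vc_def)
  have sum_\<psi>0: "(\<Sum>m\<in>Vc coal i. \<psi>0 m l) = n * p"
    using \<open>n > 0\<close> by (simp add: p_def psibar_def n_def)
  have "mat_vec (Vc coal i) (Cbar coal C v i) (\<lambda>m. e_psi coal v \<psi>0 m l) j
      = (\<Sum>m\<in>Vc coal i. (C j m - v j / n) * (\<psi>0 m l - v m * p))"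
    unfolding mat_vec_def Cbar_def n_def p_def by (intro sum.cong) (simp_all add: e_psi_def coal_eq)
  also have "\<dots> = (\<Sum>m\<in>Vc coal i. C j m * \<psi>0 m l) - p * (\<Sum>m\<in>Vc coal i. C j m * v m)
      - v j / n * (\<Sum>m\<in>Vc coal i. \<psi>0 m l) + v j / n * p * (\<Sum>m\<in>Vc coal i. v m)"
    by (simp add: algebra_simps sum.distrib sum_subtractf sum_distrib_left sum_divide_distrib)
  also have "\<dots> = (\<Sum>m\<in>Vc coal i. C j m * \<psi>0 m l) - v j * p"
    using \<open>n > 0\<close> by (simp add: v_right[OF j] sum_\<psi>0 v_sum flip: n_def)
  finally have Cbar_part: "mat_vec (Vc coal i) (Cbar coal C v i) (\<lambda>m. e_psi coal v \<psi>0 m l) j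
      = (\<Sum>m\<in>Vc coal i. C j m * \<psi>0 m l) - v j * p" .
  have "mat_vec (Vc coal i) (Ibar coal v i) d j
      = (\<Sum>m\<in>Vc coal i. (if j = m then d m else 0) - v j / n * d m)"
    unfolding mat_vec_def Ibar_def n_def by (intro sum.cong) (simp_all add: algebra_simps)
  also have "\<dots> = d j - v j * (\<Sum>m\<in>Vc coal i. d m) / n"
    using fin j by (simp add: sum_subtractf sum_distrib_left sum_divide_distrib)
  finally have Ibar_part: "mat_vec (Vc coal i) (Ibar coal v i) d j
      = d j - v j * (\<Sum>m\<in>Vc coal i. d m) / n" .
  have "e_psi coal v \<psi>1 j l = \<psi>1 j l - v j * psibar coal \<psi>1 i l"
    by (simp add: e_psi_def coal_eq[OF j])
  then show ?thesis
    using psibar_step[of coal i C \<psi>1 l \<psi>0 d, OF fin C_sum step]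
    by (simp add: Cbar_part Ibar_part step[OF j] p_def n_def algebra_simps)
qed

lemma coalition_lyapunov_step_le:
  assumes fin: "finite (Vc coal i)"
    and C_sum: "\<And>m. m \<in> Vc coal i \<Longrightarrow> (\<Sum>j\<in>Vc coal i. C j m) = 1"
    and v_right: "\<And>j. j \<in> Vc coal i \<Longrightarrow> (\<Sum>m\<in>Vc coal i. C j m * v m) = v j"
    and v_sum: "(\<Sum>j\<in>Vc coal i. v j) = real (ncoal coal i)"
    and W_sym: "\<And>j m. j \<in> Vc coal i \<Longrightarrow> m \<in> Vc coal i \<Longrightarrow> W j m = W m j"
    and lyap: "\<And>j m. j \<in> Vc coal i \<Longrightarrow> m \<in> Vc coal i \<Longrightarrow>
        mmul (Vc coal i) (mtr (Cbar coal C v i)) (mmul (Vc coal i) W (Cbar coal C v i)) j m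
          - W j m = - (if j = m then 1 else 0)"
    and step: "\<And>j l. j \<in> Vc coal i \<Longrightarrow> l \<in> Vc coal i \<Longrightarrow>
        \<psi>1 j l = (\<Sum>m\<in>Vc coal i. C j m * \<psi>0 m l) + d j l"
  shows "(\<Sum>l\<in>Vc coal i. bform (Vc coal i) W (\<lambda>j. e_psi coal v \<psi>1 j l) (\<lambda>j. e_psi coal v \<psi>1 j l)
                         - bform (Vc coal i) W (\<lambda>j. e_psi coal v \<psi>0 j l) (\<lambda>j. e_psi coal v \<psi>0 j l))
           \<le> - (1/2) * (\<Sum>j\<in>Vc coal i. \<Sum>l\<in>Vc coal i. (e_psi coal v \<psi>0 j l)\<^sup>2)
             + perturbation_gain (Vc coal i) (Cbar coal C v i) W (Ibar coal v i)
               * (\<Sum>j\<in>Vc coal i. \<Sum>l\<in>Vc coal i. (d j l)\<^sup>2)"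
    (is "(\<Sum>l\<in>_. ?E \<psi>1 l - ?E \<psi>0 l) \<le> _ + ?gain * _")
proof -
  have "?E \<psi>1 l - ?E \<psi>0 l
      \<le> - (1/2) * (\<Sum>j\<in>Vc coal i. (e_psi coal v \<psi>0 j l)\<^sup>2) + ?gain * (\<Sum>j\<in>Vc coal i. (d j l)\<^sup>2)"
    if l: "l \<in> Vc coal i" for l
  proof (rule bform_lyapunov_step[OF fin W_sym lyap])
    fix j assume "j \<in> Vc coal i"
    then show "e_psi coal v \<psi>1 j l
        = mat_vec (Vc coal i) (Cbar coal C v i) (\<lambda>j. e_psi coal v \<psi>0 j l) j
          + mat_vec (Vc coal i) (Ibar coal v i) (\<lambda>j. d j l) j"
      by (rule e_psi_step[of coal i j C v \<psi>1 l \<psi>0 "\<lambda>j. d j l", OF fin _ C_sum v_right v_sum step[OF _ l]])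
  qed
  then have "(\<Sum>l\<in>Vc coal i. ?E \<psi>1 l - ?E \<psi>0 l)
      \<le> (\<Sum>l\<in>Vc coal i. - (1/2) * (\<Sum>j\<in>Vc coal i. (e_psi coal v \<psi>0 j l)\<^sup>2)
                        + ?gain * (\<Sum>j\<in>Vc coal i. (d j l)\<^sup>2))"
    by (rule sum_mono)
  also have "\<dots> = - (1/2) * (\<Sum>l\<in>Vc coal i. \<Sum>j\<in>Vc coal i. (e_psi coal v \<psi>0 j l)\<^sup>2)
        + ?gain * (\<Sum>l\<in>Vc coal i. \<Sum>j\<in>Vc coal i. (d j l)\<^sup>2)"
    by (simp add: sum.distrib sum_distrib_left)
  finally show ?thesis
    by (simp only: sum.swap[of "\<lambda>l j. (e_psi coal v \<psi>0 j l)\<^sup>2"] sum.swap[of "\<lambda>l j. (d j l)\<^sup>2"])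
qed

lemma V_psi_step_le:
  fixes coal :: "'a::finite \<Rightarrow> 'c::finite"
  assumes C_sum: "\<And>a. (\<Sum>b\<in>Vc coal (coal a). C b a) = 1"
    and v_right: "\<And>i j. coal j = i \<Longrightarrow> (\<Sum>m\<in>Vc coal i. C j m * v m) = v j"
    and v_sum: "\<And>i. (\<Sum>j\<in>Vc coal i. v j) = real (ncoal coal i)"
    and Wc_sym: "\<And>i j m. j \<in> Vc coal i \<Longrightarrow> m \<in> Vc coal i \<Longrightarrow> Wc i j m = Wc i m j"
    and Wc_lyap: "\<And>i j m. j \<in> Vc coal i \<Longrightarrow> m \<in> Vc coal i \<Longrightarrow>
        mmul (Vc coal i) (mtr (Cbar coal C v i)) (mmul (Vc coal i) (Wc i) (Cbar coal C v i)) j m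
          - Wc i j m = - (if j = m then 1 else 0)"
    and step: "\<And>a l. coal l = coal a \<Longrightarrow>
        \<psi>1 a l = (\<Sum>m\<in>Vc coal (coal a). C a m * \<psi>0 m l) + d a l"
  shows "V_psi coal v Wc \<psi>1 - V_psi coal v Wc \<psi>0
           \<le> - (1/2) * sqnorm_e_psi coal v \<psi>0
             + (\<Sum>a\<in>UNIV. perturbation_gain (Vc coal (coal a)) (Cbar coal C v (coal a))
                             (Wc (coal a)) (Ibar coal v (coal a))
                           * (\<Sum>l\<in>Vc coal (coal a). (d a l)\<^sup>2))"
proof -
  have coal_eq: "coal j = i" if "j \<in> Vc coal i" for i j using that by (simp add: Vc_def)
  have C_col_sum: "(\<Sum>j\<in>Vc coal i. C j m) = 1" if "m \<in> Vc coal i" for i m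
    using C_sum[of m] coal_eq[OF that] by simp
  have v_right_Vc: "(\<Sum>m\<in>Vc coal i. C j m * v m) = v j" if "j \<in> Vc coal i" for i j
    using v_right[OF coal_eq[OF that]] .
  have step_Vc: "\<psi>1 j l = (\<Sum>m\<in>Vc coal i. C j m * \<psi>0 m l) + d j l"
    if "j \<in> Vc coal i" "l \<in> Vc coal i" for i j l
    using step[of l j] coal_eq[OF that(1)] coal_eq[OF that(2)] by simp
  have "V_psi coal v Wc \<psi>1 - V_psi coal v Wc \<psi>0
      = (\<Sum>i\<in>UNIV. \<Sum>l\<in>Vc coal i.
           bform (Vc coal i) (Wc i) (\<lambda>j. e_psi coal v \<psi>1 j l) (\<lambda>j. e_psi coal v \<psi>1 j l)
           - bform (Vc coal i) (Wc i) (\<lambda>j. e_psi coal v \<psi>0 j l) (\<lambda>j. e_psi coal v \<psi>0 j l))"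
    by (simp add: V_psi_def bform_def sum_subtractf)
  also have "\<dots> \<le> (\<Sum>i\<in>UNIV. - (1/2) * (\<Sum>j\<in>Vc coal i. \<Sum>l\<in>Vc coal i. (e_psi coal v \<psi>0 j l)\<^sup>2)
        + perturbation_gain (Vc coal i) (Cbar coal C v i) (Wc i) (Ibar coal v i)
          * (\<Sum>j\<in>Vc coal i. \<Sum>l\<in>Vc coal i. (d j l)\<^sup>2))"
    by (intro sum_mono coalition_lyapunov_step_le finite C_col_sum v_right_Vc v_sum Wc_sym Wc_lyap step_Vc)
  also have "\<dots> = - (1/2) * sqnorm_e_psi coal v \<psi>0
      + (\<Sum>a\<in>UNIV. perturbation_gain (Vc coal (coal a)) (Cbar coal C v (coal a))
                             (Wc (coal a)) (Ibar coal v (coal a))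
                           * (\<Sum>l\<in>Vc coal (coal a). (d a l)\<^sup>2))"
    by (simp add: sum_Vc_partition sqnorm_e_psi_def sum.distrib sum_distrib_left)
  finally show ?thesis .
qed

section \<open>The increment of \<xi>\<close>

lemma norm_vec_pow2: "(norm (w :: real^'n))\<^sup>2 = (\<Sum>i\<in>UNIV. (w $ i)\<^sup>2)"
  by (simp add: norm_vec_def L2_set_pow2)

lemma sum_sq_pd_diff_le:
  fixes f :: "real^'a \<Rightarrow> real"
  assumes "lipschitz_on L UNIV (grad f)"
  shows "(\<Sum>l\<in>T. (pd f l y - pd f l z)\<^sup>2) \<le> L\<^sup>2 * (norm (y - z))\<^sup>2"
proof -
  have "(\<Sum>l\<in>T. (pd f l y - pd f l z)\<^sup>2) \<le> (\<Sum>l\<in>UNIV. (pd f l y - pd f l z)\<^sup>2)"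
    by (rule sum_mono2) simp_all
  also have "\<dots> = (norm (grad f y - grad f z))\<^sup>2"
    by (simp add: norm_vec_pow2 grad_def)
  also have "\<dots> \<le> (L * norm (y - z))\<^sup>2"
    using lipschitz_onD[OF assms, of y z] by (intro power_mono) (auto simp: dist_norm)
  finally show ?thesis by (simp add: power_mult_distrib)
qed

lemma sum_Nin_eq_sum_adj:
  fixes E :: "('a::finite \<times> 'a) set"
  shows "(\<Sum>c\<in>Nin E a. g c) = (\<Sum>c\<in>UNIV. adj E a c * g c)"
proof -
  have "(\<Sum>c\<in>UNIV. adj E a c * g c) = (\<Sum>c\<in>UNIV. if c \<in> Nin E a then g c else 0)"
    by (intro sum.cong) (auto simp: adj_def Nin_def)
  then show ?thesis by (simp add: sum.If_cases)
qed

lemma sum_lap_mult: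
  fixes E :: "('a::finite \<times> 'a) set"
  shows "(\<Sum>c\<in>UNIV. lap E a c * g c) = (\<Sum>c\<in>UNIV. adj E a c * (g a - g c))"
proof -
  have "(\<Sum>c\<in>UNIV. lap E a c * g c)
      = (\<Sum>c\<in>UNIV. (if a = c then deg E a * g c else 0) - adj E a c * g c)"
    by (intro sum.cong) (auto simp: lap_def adj_def)
  then have "(\<Sum>c\<in>UNIV. lap E a c * g c) = deg E a * g a - (\<Sum>c\<in>UNIV. adj E a c * g c)"
    by (simp add: sum_subtractf)
  then show ?thesis
    by (simp add: deg_def sum_distrib_left sum_distrib_right right_diff_distrib sum_subtractf mult_ac)
qed

lemma sum_pairs_UNIV:
  "(\<Sum>p\<in>(UNIV :: ('a::finite \<times> 'b::finite) set). g p) = (\<Sum>a\<in>UNIV. \<Sum>b\<in>UNIV. g (a, b))"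
  by (simp add: sum.cartesian_product UNIV_Times_UNIV)

lemma mat_vec_Hmat:
  fixes E :: "('a::finite \<times> 'a) set"
  shows "mat_vec UNIV (Hmat E) X (a, b)
           = ((\<Sum>c\<in>UNIV. lap E a c * X (c, b)) + adj E a b * X (a, b)) / (deg E a + adj E a b)"
proof -
  have "mat_vec UNIV (Hmat E) X (a, b)
      = (\<Sum>c\<in>UNIV. (lap E a c * X (c, b) + (if c = a then adj E a b * X (a, b) else 0))
                     / (deg E a + adj E a b))"
    by (simp add: mat_vec_def sum_pairs_UNIV Hmat_def if_distrib[of "\<lambda>t. t * _"] distrib_right
        add_divide_distrib cong: if_cong)
  then show ?thesis
    by (simp add: sum.distrib add_divide_distrib flip: sum_divide_distrib)
qed

lemma xi_increment_eq:
  fixes E :: "('a::finite \<times> 'a) set" and \<xi>0 \<xi>1 :: "'a \<Rightarrow> real^'a"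
  assumes step: "\<xi>1 a $ b = \<xi>0 a $ b - 1 / (deg E a + adj E a b) *
          ((\<Sum>c\<in>Nin E a. \<xi>0 a $ b - \<xi>0 c $ b) + adj E a b * (\<xi>0 a $ b - x0 b))"
  shows "\<xi>1 a $ b - \<xi>0 a $ b
           = - mat_vec UNIV (Hmat E) (\<lambda>(c, d). \<xi>0 c $ d - z d) (a, b)
             + adj E a b / (deg E a + adj E a b) * (x0 b - z b)"
proof -
  have "(\<Sum>c\<in>Nin E a. \<xi>0 a $ b - \<xi>0 c $ b)
      = (\<Sum>c\<in>UNIV. adj E a c * ((\<xi>0 a $ b - z b) - (\<xi>0 c $ b - z b)))"
    by (simp add: sum_Nin_eq_sum_adj)
  also have "\<dots> = (\<Sum>c\<in>UNIV. lap E a c * (\<xi>0 c $ b - z b))"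
    by (rule sum_lap_mult[symmetric])
  finally show ?thesis
    unfolding step mat_vec_Hmat
    by (simp add: field_simps add_divide_distrib diff_divide_distrib)
qed

lemma adj_weight_le_spec_norm_Hmat:
  fixes E :: "('a::finite \<times> 'a) set"
  shows "adj E a b / (deg E a + adj E a b) \<le> spec_norm UNIV (Hmat E)"
proof (cases "adj E a b = 0")
  case True
  then show ?thesis by (simp add: spec_norm_nonneg)
next
  case False
  then have "adj E a b = 1" by (simp add: adj_def split: if_splits)
  moreover have "adj E a b \<le> deg E a"
    unfolding deg_def by (rule member_le_sum) (simp_all add: adj_def)
  ultimately have "adj E a b / (deg E a + adj E a b) \<le> 1"
    by simp
  also have "1 = \<bar>Hmat E (a, b) (a, b)\<bar>"
    using \<open>adj E a b = 1\<close> \<open>adj E a b \<le> deg E a\<close> by (simp add: Hmat_def lap_def)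
  also have "\<dots> \<le> spec_norm UNIV (Hmat E)"
    by (rule abs_diag_le_spec_norm) simp_all
  finally show ?thesis .
qed

lemma xi_increment_le:
  fixes coal :: "'a::finite \<Rightarrow> 'c" and E :: "('a \<times> 'a) set" and \<xi>0 \<xi>1 :: "'a \<Rightarrow> real^'a"
  assumes step: "\<And>a b. \<xi>1 a $ b = \<xi>0 a $ b - 1 / (deg E a + adj E a b) *
          ((\<Sum>c\<in>Nin E a. \<xi>0 a $ b - \<xi>0 c $ b) + adj E a b * (\<xi>0 a $ b - x0 b))"
  shows "(\<Sum>a\<in>UNIV. (norm (\<xi>1 a - \<xi>0 a))\<^sup>2)
           \<le> 2 * (spec_norm UNIV (Hmat E))\<^sup>2 * sqnorm_e_xi coal u x0 \<xi>0
             + 2 * real CARD('a) * (spec_norm UNIV (Hmat E))\<^sup>2 * sqnorm_e_x coal u x0"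
proof -
  define h where "h = spec_norm UNIV (Hmat E)"
  define z where "z b = xbar coal u x0 (coal b)" for b
  define e\<xi> where "e\<xi> = (\<lambda>(c, d). \<xi>0 c $ d - z d)"
  define w where "w a b = adj E a b / (deg E a + adj E a b)" for a b
  have w_sq: "(w a b)\<^sup>2 \<le> h\<^sup>2" for a b
    unfolding w_def h_def
    by (intro power_mono adj_weight_le_spec_norm_Hmat) (simp add: adj_def deg_def sum_nonneg)
  have increment: "\<xi>1 a $ b - \<xi>0 a $ b = - mat_vec UNIV (Hmat E) e\<xi> (a, b) + w a b * (x0 b - z b)"
    for a b unfolding e\<xi>_def w_def by (rule xi_increment_eq[OF step])
  have "(\<Sum>a\<in>UNIV. (norm (\<xi>1 a - \<xi>0 a))\<^sup>2)
      = (\<Sum>a\<in>UNIV. \<Sum>b\<in>UNIV. (- mat_vec UNIV (Hmat E) e\<xi> (a, b) + w a b * (x0 b - z b))\<^sup>2)"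
    unfolding norm_vec_pow2 by (simp add: increment)
  also have "\<dots> \<le> (\<Sum>a\<in>UNIV. \<Sum>b\<in>UNIV.
                    2 * (mat_vec UNIV (Hmat E) e\<xi> (a, b))\<^sup>2 + 2 * (w a b)\<^sup>2 * (x0 b - z b)\<^sup>2)"
    by (intro sum_mono) (use zero_le_power2[of "mat_vec UNIV (Hmat E) e\<xi> (_, _) + w _ _ * (x0 _ - z _)"]
        in \<open>simp add: power2_eq_square algebra_simps\<close>)
  also have "\<dots> = 2 * (\<Sum>p\<in>UNIV. (mat_vec UNIV (Hmat E) e\<xi> p)\<^sup>2)
                  + 2 * (\<Sum>a\<in>UNIV. \<Sum>b\<in>UNIV. (w a b)\<^sup>2 * (x0 b - z b)\<^sup>2)"
    by (simp add: sum_pairs_UNIV sum.distrib sum_distrib_left mult.assoc)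
  moreover have "(\<Sum>p\<in>UNIV. (mat_vec UNIV (Hmat E) e\<xi> p)\<^sup>2) \<le> h\<^sup>2 * sqnorm_e_xi coal u x0 \<xi>0"
    using sum_sq_mat_vec_le[of UNIV "Hmat E" e\<xi>]
    by (simp add: h_def e\<xi>_def z_def sqnorm_e_xi_def sum_pairs_UNIV)
  moreover have "(\<Sum>a\<in>UNIV. \<Sum>b\<in>UNIV. (w a b)\<^sup>2 * (x0 b - z b)\<^sup>2)
      \<le> (\<Sum>a\<in>(UNIV :: 'a set). \<Sum>b\<in>UNIV. h\<^sup>2 * (x0 b - z b)\<^sup>2)"
    by (intro sum_mono mult_right_mono w_sq) simp
  moreover have "\<dots> = real CARD('a) * h\<^sup>2 * sqnorm_e_x coal u x0"
    by (simp add: z_def sqnorm_e_x_def sum_distrib_left mult.assoc)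
  ultimately show ?thesis by (simp add: h_def)
qed

theorem lemma1:
  fixes coal :: "'a::finite \<Rightarrow> 'c::finite"
    and E :: "('a \<times> 'a) set"
    and f :: "'a \<Rightarrow> real^'a \<Rightarrow> real"
    and lip :: "'a \<Rightarrow> real"
    and R C :: "'a \<Rightarrow> 'a \<Rightarrow> real"
    and u v :: "'a \<Rightarrow> real"
    and Wc :: "'c \<Rightarrow> 'a \<Rightarrow> 'a \<Rightarrow> real"
    and \<alpha> :: real
    and x :: "nat \<Rightarrow> 'a \<Rightarrow> real"
    and \<xi> :: "nat \<Rightarrow> 'a \<Rightarrow> real^'a"
    and \<psi> :: "nat \<Rightarrow> 'a \<Rightarrow> 'a \<Rightarrow> real"
  assumes coal_surj: "surj coal"
    \<comment> \<open>(A1)\<close>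
    and A1_G: "strongly_connected UNIV E"
    and A1_Gi: "\<And>i. strongly_connected (Vc coal i) E"
    \<comment> \<open>(A2)\<close>
    and A2_convex: "\<And>a. convex_on UNIV (f a)"
    and A2_C2: "\<And>a. C2 (f a)"
    and A2_lip: "\<And>a. lipschitz_on (lip a) UNIV (grad (f a))"
    \<comment> \<open>weights\<close>
    and R_pos: "\<And>a b. coal b = coal a \<Longrightarrow> b \<in> Nin_i coal E a \<union> {a} \<Longrightarrow> R a b > 0"
    and R_zero: "\<And>a b. coal b = coal a \<Longrightarrow> b \<notin> Nin_i coal E a \<union> {a} \<Longrightarrow> R a b = 0"
    and R_sum: "\<And>a. (\<Sum>b\<in>Vc coal (coal a). R a b) = 1"
    and C_pos: "\<And>a b. coal b = coal a \<Longrightarrow> b \<in> Nout_i coal E a \<union> {a} \<Longrightarrow> C b a > 0"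
    and C_zero: "\<And>a b. coal b = coal a \<Longrightarrow> b \<notin> Nout_i coal E a \<union> {a} \<Longrightarrow> C b a = 0"
    and C_sum: "\<And>a. (\<Sum>b\<in>Vc coal (coal a). C b a) = 1"
    and alpha_pos: "\<alpha> > 0"
    \<comment> \<open>auxiliary vectors u_i, v_i\<close>
    and u_left: "\<And>i m. coal m = i \<Longrightarrow> (\<Sum>j\<in>Vc coal i. u j * R j m) = u m"
    and u_sum: "\<And>i. (\<Sum>j\<in>Vc coal i. u j) = real (ncoal coal i)"
    and v_right: "\<And>i j. coal j = i \<Longrightarrow> (\<Sum>m\<in>Vc coal i. C j m * v m) = v j"
    and v_sum: "\<And>i. (\<Sum>j\<in>Vc coal i. v j) = real (ncoal coal i)"
    \<comment> \<open>W_{c_i}: symmetric positive definite solution of the Lyapunov equation\<close>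
    and Wc_sym: "\<And>i j m. j \<in> Vc coal i \<Longrightarrow> m \<in> Vc coal i \<Longrightarrow> Wc i j m = Wc i m j"
    and Wc_pd: "\<And>i z. (\<exists>j\<in>Vc coal i. z j \<noteq> 0) \<Longrightarrow>
                   (\<Sum>j\<in>Vc coal i. \<Sum>m\<in>Vc coal i. z j * Wc i j m * z m) > 0"
    and Wc_lyap: "\<And>i j m. j \<in> Vc coal i \<Longrightarrow> m \<in> Vc coal i \<Longrightarrow>
        mmul (Vc coal i) (mtr (Cbar coal C v i)) (mmul (Vc coal i) (Wc i) (Cbar coal C v i)) j m
          - Wc i j m = - (if j = m then 1 else 0)"
    \<comment> \<open>algorithm\<close>
    and psi_init: "\<And>a l. coal l = coal a \<Longrightarrow> \<psi> 0 a l = pd (f a) l (\<xi> 0 a)"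
    and x_step: "\<And>k a. x (Suc k) a =
        (\<Sum>m\<in>Vc coal (coal a). R a m * x k m)
          - \<alpha> / real (ncoal coal (coal a)) * (\<Sum>m\<in>Vc coal (coal a). \<psi> k a m)"
    and xi_step: "\<And>k a b. \<xi> (Suc k) a $ b =
        \<xi> k a $ b - 1 / (deg E a + adj E a b) *
          ((\<Sum>c\<in>Nin E a. \<xi> k a $ b - \<xi> k c $ b) + adj E a b * (\<xi> k a $ b - x k b))"
    and psi_step: "\<And>k a l. coal l = coal a \<Longrightarrow> \<psi> (Suc k) a l =
        (\<Sum>m\<in>Vc coal (coal a). C a m * \<psi> k m l)
          + pd (f a) l (\<xi> (Suc k) a) - pd (f a) l (\<xi> k a)"
  shows "\<forall>k. V_psi coal v Wc (\<psi> (Suc k)) - V_psi coal v Wc (\<psi> k)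
           \<le> - (1/2) * sqnorm_e_psi coal v (\<psi> k)
             + beta_psi_xi coal E C v Wc lip * sqnorm_e_xi coal u (x k) (\<xi> k)
             + beta_psi_x coal E C v Wc lip * sqnorm_e_x coal u (x k)"
proof
  fix k
  define gain where "gain a = perturbation_gain (Vc coal (coal a)) (Cbar coal C v (coal a))
                                (Wc (coal a)) (Ibar coal v (coal a))" for a
  define M where "M = (MAX a\<in>UNIV. gain a * (lip a)\<^sup>2)"
  define D where "D a l = pd (f a) l (\<xi> (Suc k) a) - pd (f a) l (\<xi> k a)" for a l
  define \<Delta> where "\<Delta> a = (norm (\<xi> (Suc k) a - \<xi> k a))\<^sup>2" for a
  have gain_nonneg: "0 \<le> gain a" for a by (simp add: gain_def perturbation_gain_nonneg)
  have M_ge: "gain a * (lip a)\<^sup>2 \<le> M" for a by (simp add: M_def)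
  have "0 \<le> M" using gain_nonneg M_ge by (meson order.trans mult_nonneg_nonneg zero_le_power2)
  have psi_increment: "\<psi> (Suc k) a l = (\<Sum>m\<in>Vc coal (coal a). C a m * \<psi> k m l) + D a l"
    if "coal l = coal a" for a l
    using psi_step[OF that] by (simp add: D_def)
  have "V_psi coal v Wc (\<psi> (Suc k)) - V_psi coal v Wc (\<psi> k)
      \<le> - (1/2) * sqnorm_e_psi coal v (\<psi> k) + (\<Sum>a\<in>UNIV. gain a * (\<Sum>l\<in>Vc coal (coal a). (D a l)\<^sup>2))"
    unfolding gain_def by (rule V_psi_step_le[OF C_sum v_right v_sum Wc_sym Wc_lyap psi_increment])
  also have "(\<Sum>a\<in>UNIV. gain a * (\<Sum>l\<in>Vc coal (coal a). (D a l)\<^sup>2)) \<le> (\<Sum>a\<in>UNIV. gain a * ((lip a)\<^sup>2 * \<Delta> a))"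
    unfolding D_def \<Delta>_def by (intro sum_mono mult_left_mono sum_sq_pd_diff_le A2_lip gain_nonneg)
  also have "\<dots> \<le> M * (\<Sum>a\<in>UNIV. \<Delta> a)"
    unfolding sum_distrib_left mult.assoc[symmetric]
    by (intro sum_mono mult_right_mono M_ge) (simp add: \<Delta>_def)
  also have "\<dots> \<le> M * (2 * (spec_norm UNIV (Hmat E))\<^sup>2 * sqnorm_e_xi coal u (x k) (\<xi> k)
        + 2 * real CARD('a) * (spec_norm UNIV (Hmat E))\<^sup>2 * sqnorm_e_x coal u (x k))"
    unfolding \<Delta>_def by (intro mult_left_mono xi_increment_le xi_step \<open>0 \<le> M\<close>)
  finally show "V_psi coal v Wc (\<psi> (Suc k)) - V_psi coal v Wc (\<psi> k)
      \<le> - (1/2) * sqnorm_e_psi coal v (\<psi> k)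
        + beta_psi_xi coal E C v Wc lip * sqnorm_e_xi coal u (x k) (\<xi> k)
        + beta_psi_x coal E C v Wc lip * sqnorm_e_x coal u (x k)"
    by (simp add: beta_psi_xi_def beta_psi_x_def perturbation_gain_def M_def gain_def algebra_simps)
qed

end
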